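(* Let $\ln_G:(0,\infty)\to\mathbb{R}$ be a continuous, strictly increasing, strictly concave function with $\ln_G(1)=0$, let $0<\alpha<1$, and for probability distributions $p=(p_1,\dots,p_W)$ define $Z_{G,\alpha}(p):=\frac{\ln_G(\sum_{i=1}^W p_i^{\alpha})}{1-\alpha}$. Then $Z_{G,\alpha}$ satisfies: (SK1) it is continuous in all arguments $p_1,\dots,p_W$; (SK2) it attains its maximum value over the probability simplex at the uniform distribution $p_i=1/W$ (indeed it is strictly concave); (SK3) $Z_{G,\alpha}(p_1,\dots,p_W,0)=Z_{G,\alpha}(p_1,\dots,p_W)$. *)

theory Defs
  imports "HOL-Analysis.Analysis"
begin

definition strict_concave_on_real :: "real set \<Rightarrow> (real \<Rightarrow> real) \<Rightarrow> bool" where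
  "strict_concave_on_real S f \<longleftrightarrow> convex S \<and>
     (\<forall>x\<in>S. \<forall>y\<in>S. x \<noteq> y \<longrightarrow> (\<forall>t::real. 0 < t \<and> t < 1 \<longrightarrow>
        f (t * x + (1 - t) * y) > t * f x + (1 - t) * f y))"

text \<open>Probability distributions (p_0,...,p_{W-1}) on W outcomes, represented as the
  first W coordinates of a function nat => real; other coordinates are ignored.\<close>
definition prob_simplex :: "nat \<Rightarrow> (nat \<Rightarrow> real) set" where
  "prob_simplex W = {p. (\<forall>i<W. 0 \<le> p i) \<and> (\<Sum>i<W. p i) = 1}"

definition Z_G :: "(real \<Rightarrow> real) \<Rightarrow> real \<Rightarrow> nat \<Rightarrow> (nat \<Rightarrow> real) \<Rightarrow> real" where
  "Z_G lnG \<alpha> W p = lnG (\<Sum>i<W. p i powr \<alpha>) / (1 - \<alpha>)"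

end

theory Submission
  imports Defs
begin

text \<open>
  For \<open>0 < \<alpha> < 1\<close> the map \<open>x \<mapsto> x powr \<alpha>\<close> lies strictly below each of its tangent lines,
  hence is strictly concave on \<open>[0, \<infinity>)\<close>. Summing over the coordinates, the power sum
  \<open>\<Sum>\<^sub>i p\<^sub>i powr \<alpha>\<close> is strictly concave on the probability simplex, and comparing it with the
  tangent plane at the uniform distribution shows that it is maximal there. Composing with
  the strictly increasing, strictly concave \<open>ln\<^sub>G\<close> preserves both facts, and dividing by
  \<open>1 - \<alpha> > 0\<close> does too. Continuity is inherited from \<open>ln\<^sub>G\<close> because the power sum stays
  positive on the simplex, and an added zero coordinate contributes \<open>0 powr \<alpha> = 0\<close>.
\<close>

lemma ln_less_minus_one: "0 < (y::real) \<Longrightarrow> y \<noteq> 1 \<Longrightarrow> ln y < y - 1"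
  using ln_le_minus_one[of y] ln_eq_minus_one[of y] by fastforce

lemma powr_less_tangent_line:
  fixes z a :: real
  assumes "0 \<le> z" "z \<noteq> 1" "0 < a" "a < 1"
  shows "z powr a < 1 + a * (z - 1)"
proof (cases "z = 0")
  case True
  then show ?thesis using assms by simp
next
  case False
  with assms have z: "0 < z" by simp
  define c where "c = a * z + (1 - a)"
  have c: "0 < c" using z assms by (simp add: c_def add_pos_pos)
  have "z \<noteq> c"
  proof
    assume "z = c"
    then have "z * (1 - a) = 1 - a" by (simp add: c_def algebra_simps)
    with assms show False by simp
  qed
  \<comment> \<open>Weighted AM-GM: apply \<open>ln y \<le> y - 1\<close> at \<open>z/c\<close> (strictly) and at \<open>1/c\<close>, with weights \<open>a, 1 - a\<close>.\<close>
  then have "ln (z / c) < z / c - 1"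
    using ln_less_minus_one[of "z / c"] z c by simp
  moreover have "ln (1 / c) \<le> 1 / c - 1"
    using ln_le_minus_one[of "1 / c"] c by simp
  ultimately have "a * ln (z / c) + (1 - a) * ln (1 / c) < a * (z / c - 1) + (1 - a) * (1 / c - 1)"
    using assms by (intro add_less_le_mono) auto
  also have "\<dots> = 0" using c by (simp add: c_def field_simps)
  finally have "a * ln z < ln c"
    using z c by (simp add: ln_div algebra_simps)
  then have "exp (a * ln z) < c"
    using c by (metis exp_less_cancel_iff exp_ln)
  then show ?thesis using z by (simp add: powr_def c_def algebra_simps)
qed

lemma powr_less_tangent:
  fixes x m a :: real
  assumes "0 \<le> x" "0 < m" "x \<noteq> m" "0 < a" "a < 1"
  shows "x powr a < m powr a * (1 + a * (x / m - 1))"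
proof -
  have "(x / m) powr a < 1 + a * (x / m - 1)"
    using powr_less_tangent_line[of "x / m" a] assms by simp
  then have "m powr a * (x / m) powr a < m powr a * (1 + a * (x / m - 1))"
    using assms by simp
  then show ?thesis using assms by (simp add: powr_divide)
qed

lemma powr_le_tangent:
  fixes x m a :: real
  assumes "0 \<le> x" "0 < m" "0 < a" "a < 1"
  shows "x powr a \<le> m powr a * (1 + a * (x / m - 1))"
  using powr_less_tangent[OF assms(1,2) _ assms(3,4)] assms by (cases "x = m") auto

lemma strict_concave_on_real_powr:
  fixes a :: real
  assumes "0 < a" "a < 1"
  shows "strict_concave_on_real {0..} (\<lambda>x. x powr a)"
  unfolding strict_concave_on_real_def
proof (intro conjI ballI allI impI)
  fix x y t :: real
  assume x: "x \<in> {0..}" and y: "y \<in> {0..}" and "x \<noteq> y" and t: "0 < t \<and> t < 1"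
  define m where "m = t * x + (1 - t) * y"
  have "0 < m"
    using x y t \<open>x \<noteq> y\<close> unfolding m_def
    by (smt (verit, best) atLeast_iff mult_nonneg_nonneg mult_pos_pos)
  have "x \<noteq> m"
  proof
    assume "x = m"
    then have "(1 - t) * (x - y) = 0" by (simp add: m_def algebra_simps)
    with \<open>x \<noteq> y\<close> t show False by auto
  qed
  have "y \<noteq> m"
  proof
    assume "y = m"
    then have "t * (x - y) = 0" by (auto simp: m_def algebra_simps)
    with \<open>x \<noteq> y\<close> t show False by auto
  qed
  have "t * x powr a + (1 - t) * y powr a <
      t * (m powr a * (1 + a * (x / m - 1))) + (1 - t) * (m powr a * (1 + a * (y / m - 1)))"
    using powr_less_tangent[of x m a] powr_less_tangent[of y m a]
      x y t assms \<open>0 < m\<close> \<open>x \<noteq> m\<close> \<open>y \<noteq> m\<close>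
    by (intro add_strict_mono mult_strict_left_mono) auto
  also have "\<dots> = m powr a * (1 + a * ((t * x + (1 - t) * y) / m - 1))"
    using \<open>0 < m\<close> by (simp add: field_simps)
  also have "\<dots> = m powr a" using \<open>0 < m\<close> by (simp add: m_def)
  finally show "t * x powr a + (1 - t) * y powr a < (t * x + (1 - t) * y) powr a"
    by (simp add: m_def)
qed simp

lemma strict_concave_on_realD_le:
  assumes "strict_concave_on_real S f" "x \<in> S" "y \<in> S" "0 < t" "t < 1"
  shows "t * f x + (1 - t) * f y \<le> f (t * x + (1 - t) * y)"
proof (cases "x = y")
  case True
  then show ?thesis by (simp add: algebra_simps)
next
  case False
  with assms show ?thesis by (auto simp: strict_concave_on_real_def intro: less_imp_le)
qed

lemma strict_concave_on_real_mono_less: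
  assumes conc: "strict_concave_on_real S f" and incr: "strict_mono_on S f"
    and "u \<in> S" "v \<in> S" "w \<in> S" "0 < t" "t < 1"
    and less: "t * u + (1 - t) * v < w"
  shows "t * f u + (1 - t) * f v < f w"
proof -
  have "t * u + (1 - t) * v \<in> S"
    using conc assms convexD[of S u v t "1 - t"]
    by (simp add: strict_concave_on_real_def)
  then have "f (t * u + (1 - t) * v) < f w"
    using incr less \<open>w \<in> S\<close> by (simp add: strict_mono_on_less)
  then show ?thesis
    using strict_concave_on_realD_le[OF conc] assms by fastforce
qed

lemma uniform_in_prob_simplex: "1 \<le> W \<Longrightarrow> (\<lambda>i. 1 / real W) \<in> prob_simplex W"
  by (simp add: prob_simplex_def)

lemma prob_simplex_ex_nonzero:
  assumes "p \<in> prob_simplex W"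
  shows "\<exists>i<W. p i \<noteq> 0"
proof (rule ccontr)
  assume "\<not> ?thesis"
  then have "(\<Sum>i<W. p i) = 0" by (intro sum.neutral) auto
  with assms show False by (simp add: prob_simplex_def)
qed

lemma sum_powr_pos_on_prob_simplex:
  assumes "p \<in> prob_simplex W"
  shows "0 < (\<Sum>i<W. p i powr a)"
proof -
  obtain i where "i < W" "p i \<noteq> 0"
    using prob_simplex_ex_nonzero[OF assms] by blast
  then show ?thesis by (intro sum_pos2[of _ i]) auto
qed

lemma continuous_on_sum_powr:
  fixes W :: nat and a :: real
  assumes "0 < a"
  shows "continuous_on {p. \<forall>i<W. 0 \<le> p i} (\<lambda>p. \<Sum>i<W. p i powr a)"
proof (intro continuous_on_sum continuous_on_powr')
  fix i :: nat
  show "continuous_on {p. \<forall>i<W. 0 \<le> p i} (\<lambda>p. p i)"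
    by (rule continuous_on_subset[OF continuous_on_product_coordinates]) simp
qed (use assms in auto)

lemma sum_powr_le_uniform:
  fixes a :: real
  assumes p: "p \<in> prob_simplex W" and a: "0 < a" "a < 1"
  shows "(\<Sum>i<W. p i powr a) \<le> (\<Sum>i<W. (1 / real W) powr a)"
proof -
  define m where "m = 1 / real W"
  have "W \<noteq> 0" using prob_simplex_ex_nonzero[OF p] by auto
  then have "0 < m" by (simp add: m_def)
  have "(\<Sum>i<W. p i powr a) \<le> (\<Sum>i<W. m powr a * (1 + a * (p i / m - 1)))"
    using p a \<open>0 < m\<close> by (intro sum_mono powr_le_tangent) (auto simp: prob_simplex_def)
  also have "\<dots> = m powr a * (real W + a * ((\<Sum>i<W. p i) / m - real W))"
    by (simp add: sum_distrib_left sum.distrib sum_subtractf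
        flip: sum_divide_distrib add: algebra_simps)
  also have "\<dots> = (\<Sum>i<W. m powr a)"
    using p \<open>W \<noteq> 0\<close> by (simp add: prob_simplex_def m_def)
  finally show ?thesis by (simp add: m_def)
qed

lemma sum_powr_strict_concave_on_prob_simplex:
  fixes a t :: real
  assumes "p \<in> prob_simplex W" "q \<in> prob_simplex W" "\<exists>i<W. p i \<noteq> q i"
    and "0 < t" "t < 1" "0 < a" "a < 1"
  shows "t * (\<Sum>i<W. p i powr a) + (1 - t) * (\<Sum>i<W. q i powr a)
    < (\<Sum>i<W. (t * p i + (1 - t) * q i) powr a)"
proof -
  have conc: "strict_concave_on_real {0..} (\<lambda>x. x powr a)"
    using assms by (intro strict_concave_on_real_powr)
  have "t * (\<Sum>i<W. p i powr a) + (1 - t) * (\<Sum>i<W. q i powr a)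
      = (\<Sum>i<W. t * p i powr a + (1 - t) * q i powr a)"
    by (simp add: sum_distrib_left sum.distrib)
  also have "\<dots> < (\<Sum>i<W. (t * p i + (1 - t) * q i) powr a)"
    using assms strict_concave_on_realD_le[OF conc] conc
    by (intro sum_strict_mono_ex1) (fastforce simp: prob_simplex_def strict_concave_on_real_def)+
  finally show ?thesis .
qed

lemma Z_G_extend_zero: "Z_G lnG \<alpha> (Suc W) (p(W := 0)) = Z_G lnG \<alpha> W p"
proof -
  have "(\<Sum>i<Suc W. (p(W := 0)) i powr \<alpha>) = (\<Sum>i<W. p i powr \<alpha>)"
    by (simp add: lessThan_Suc)
  then show ?thesis by (simp add: Z_G_def)
qed

lemma continuous_on_Z_G:
  assumes "continuous_on {0<..} lnG" "0 < \<alpha>"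
  shows "continuous_on (prob_simplex W) (Z_G lnG \<alpha> W)"
proof -
  have "continuous_on (prob_simplex W) (\<lambda>p. \<Sum>i<W. p i powr \<alpha>)"
    using continuous_on_sum_powr[OF \<open>0 < \<alpha>\<close>]
    by (rule continuous_on_subset) (auto simp: prob_simplex_def)
  then have "continuous_on (prob_simplex W) (\<lambda>p. lnG (\<Sum>i<W. p i powr \<alpha>))"
    by (rule continuous_on_compose2[OF assms(1)]) (auto intro: sum_powr_pos_on_prob_simplex)
  then show ?thesis
    unfolding Z_G_def[abs_def] divide_inverse by (intro continuous_intros)
qed

lemma Z_G_le_uniform:
  assumes incr: "strict_mono_on {0<..} lnG" and alpha: "0 < \<alpha>" "\<alpha> < 1"
    and p: "p \<in> prob_simplex W"
  shows "Z_G lnG \<alpha> W p \<le> Z_G lnG \<alpha> W (\<lambda>i. 1 / real W)"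
proof -
  have "W \<noteq> 0" using prob_simplex_ex_nonzero[OF p] by auto
  then have "lnG (\<Sum>i<W. p i powr \<alpha>) \<le> lnG (\<Sum>i<W. (1 / real W) powr \<alpha>)"
    using sum_powr_le_uniform[OF p alpha] sum_powr_pos_on_prob_simplex[OF p]
    by (intro strict_mono_on_leD[OF incr]) auto
  then show ?thesis using alpha by (simp add: Z_G_def divide_right_mono)
qed

lemma Z_G_strict_concave_on_prob_simplex:
  fixes t :: real
  assumes conc: "strict_concave_on_real {0<..} lnG" and incr: "strict_mono_on {0<..} lnG"
    and alpha: "0 < \<alpha>" "\<alpha> < 1"
    and p: "p \<in> prob_simplex W" and q: "q \<in> prob_simplex W" and pq: "\<exists>i<W. p i \<noteq> q i"
    and t: "0 < t" "t < 1"
  shows "t * Z_G lnG \<alpha> W p + (1 - t) * Z_G lnG \<alpha> W q < Z_G lnG \<alpha> W (\<lambda>i. t * p i + (1 - t) * q i)"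
proof -
  have Sp: "0 < (\<Sum>i<W. p i powr \<alpha>)" and Sq: "0 < (\<Sum>i<W. q i powr \<alpha>)"
    using p q by (simp_all add: sum_powr_pos_on_prob_simplex)
  have mix_less: "t * (\<Sum>i<W. p i powr \<alpha>) + (1 - t) * (\<Sum>i<W. q i powr \<alpha>)
      < (\<Sum>i<W. (t * p i + (1 - t) * q i) powr \<alpha>)"
    using sum_powr_strict_concave_on_prob_simplex[OF p q pq t alpha] .
  moreover have "0 < t * (\<Sum>i<W. p i powr \<alpha>) + (1 - t) * (\<Sum>i<W. q i powr \<alpha>)"
    using t Sp Sq by (intro add_pos_pos mult_pos_pos) auto
  ultimately have "t * lnG (\<Sum>i<W. p i powr \<alpha>) + (1 - t) * lnG (\<Sum>i<W. q i powr \<alpha>)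
      < lnG (\<Sum>i<W. (t * p i + (1 - t) * q i) powr \<alpha>)"
    using Sp Sq t by (intro strict_concave_on_real_mono_less[OF conc incr _ _ _ _ _ mix_less]) auto
  then show ?thesis
    using alpha by (simp add: Z_G_def divide_strict_right_mono flip: add_divide_distrib)
qed

theorem mainTheorem6:
  fixes lnG :: "real \<Rightarrow> real" and \<alpha> :: real and W :: nat
  assumes cont: "continuous_on {0<..} lnG"
    and incr: "strict_mono_on {0<..} lnG"
    and conc: "strict_concave_on_real {0<..} lnG"
    and one: "lnG 1 = 0"
    and alpha: "0 < \<alpha>" "\<alpha> < 1"
    and W: "1 \<le> W"
  shows "continuous_on (prob_simplex W) (Z_G lnG \<alpha> W)
    \<and> (\<lambda>i. 1 / real W) \<in> prob_simplex W
    \<and> (\<forall>p\<in>prob_simplex W. Z_G lnG \<alpha> W p \<le> Z_G lnG \<alpha> W (\<lambda>i. 1 / real W))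
    \<and> (\<forall>p\<in>prob_simplex W. \<forall>q\<in>prob_simplex W. (\<exists>i<W. p i \<noteq> q i) \<longrightarrow>
         (\<forall>t::real. 0 < t \<and> t < 1 \<longrightarrow>
            Z_G lnG \<alpha> W (\<lambda>i. t * p i + (1 - t) * q i)
              > t * Z_G lnG \<alpha> W p + (1 - t) * Z_G lnG \<alpha> W q))
    \<and> (\<forall>p\<in>prob_simplex W. Z_G lnG \<alpha> (Suc W) (p(W := 0)) = Z_G lnG \<alpha> W p)"
proof (intro conjI ballI allI impI)
  show "continuous_on (prob_simplex W) (Z_G lnG \<alpha> W)"
    by (rule continuous_on_Z_G[OF cont alpha(1)])
  show "(\<lambda>i. 1 / real W) \<in> prob_simplex W"
    using W by (rule uniform_in_prob_simplex)
  fix p assume p: "p \<in> prob_simplex W"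
  show "Z_G lnG \<alpha> W p \<le> Z_G lnG \<alpha> W (\<lambda>i. 1 / real W)"
    by (rule Z_G_le_uniform[OF incr alpha p])
  show "Z_G lnG \<alpha> (Suc W) (p(W := 0)) = Z_G lnG \<alpha> W p"
    by (rule Z_G_extend_zero)
  fix q and t :: real
  assume "q \<in> prob_simplex W" "\<exists>i<W. p i \<noteq> q i" "0 < t \<and> t < 1"
  then show "t * Z_G lnG \<alpha> W p + (1 - t) * Z_G lnG \<alpha> W q
      < Z_G lnG \<alpha> W (\<lambda>i. t * p i + (1 - t) * q i)"
    using Z_G_strict_concave_on_prob_simplex[OF conc incr alpha p] by blast
qed

end
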